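(* There exists a universal constant $C>0$ with the following property. Let $n, M \in \mathbb{N}$, $0<\alpha<\tfrac12$, and $0<\delta<\tfrac12\min\left(1,\frac{C\alpha^{2}}{\sqrt{M}}\right)$. Let $\mu_M$ and $\nu_{M,\delta}$ be the probability measures on $[n]^M$ defined in the context. Then $$\|\mu_{M}-\nu_{M,\delta}\|_{\mathrm{TV}}\le \alpha .$$
   Context: $[n]=\{1,\dots,n\}$. For probability measures $\mu,\nu$ on a common measurable space, $\|\mu-\nu\|_{\mathrm{TV}}=\sup_A|\mu(A)-\nu(A)|$. The measure $\mu_M$ is the uniform distribution on $[n]^M$, i.e. the law of a vector $E=(E[1],\dots,E[M])$ with $E[i]$ i.i.d. uniform on $\{1,\dots,n\}$. The measure $\nu_{M,\delta}$ (for $0<\delta<1$) is the law of the vector $D=(D[1],\dots,D[M])$ constructed as follows: sample $E[1],\dots,E[M]$ i.i.d. uniform on $\{1,\dots,n\}$, independently sample $B[1],\dots,B[M]$ i.i.d. $\mathrm{Bernoulli}(\delta)$ and $E^{+}[1],\dots,E^{+}[M]$ i.i.d. uniform on $\{\lceil n/2\rceil,\dots,n\}$, and set $D[i]=E[i]$ if $B[i]=0$ and $D[i]=E^{+}[i]$ if $B[i]=1$. The constant $C$ does not depend on $n,M,\alpha,\delta$. *)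

theory Defs
  imports "HOL-Probability.Probability"
begin

definition tv_dist :: "'a pmf \<Rightarrow> 'a pmf \<Rightarrow> real" where
  "tv_dist p q = (SUP A. \<bar>measure_pmf.prob p A - measure_pmf.prob q A\<bar>)"

text \<open>Vectors in [n]^M are represented as functions nat \<Rightarrow> nat supported on
  coordinates 0..M-1 (value 0 outside), as produced by Pi_pmf.\<close>

definition mu :: "nat \<Rightarrow> nat \<Rightarrow> (nat \<Rightarrow> nat) pmf" where
  "mu n M = Pi_pmf {..<M} 0 (\<lambda>_. pmf_of_set {1..n})"

definition nu :: "nat \<Rightarrow> nat \<Rightarrow> real \<Rightarrow> (nat \<Rightarrow> nat) pmf" where
  "nu n M \<delta> =
     do { E \<leftarrow> Pi_pmf {..<M} 0 (\<lambda>_. pmf_of_set {1..n});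
          B \<leftarrow> Pi_pmf {..<M} False (\<lambda>_. bernoulli_pmf \<delta>);
          Ep \<leftarrow> Pi_pmf {..<M} 0 (\<lambda>_. pmf_of_set {nat \<lceil>real n / 2\<rceil>..n});
          return_pmf (\<lambda>i. if B i then Ep i else E i) }"

end

theory Submission
  imports Defs
begin

text \<open>
  A sample of \<open>\<nu>\<^sub>M\<^sub>,\<^sub>\<delta>\<close> has independent coordinates, each distributed as the mixture
  \<open>q = (1 - \<delta>) U[n] + \<delta> U[\<lceil>n/2\<rceil>..n]\<close>, while \<open>\<mu>\<^sub>M\<close> is uniform on \<open>S = [n]\<^sup>M\<close>.
  By Cauchy-Schwarz, the distance of any law \<open>Q\<close> on \<open>S\<close> to the uniform law is at most
  \<open>sqrt (|S| \<Sum>\<^sub>x Q(x)\<^sup>2 - 1)\<close> (the chi-square divergence). The collision probability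
  \<open>\<Sum>\<^sub>x Q(x)\<^sup>2\<close> is multiplicative over independent coordinates, and since the upper half
  of \<open>[n]\<close> has at least \<open>n/2\<close> elements, \<open>n \<Sum>\<^sub>k q(k)\<^sup>2 \<le> 1 + \<delta>\<^sup>2\<close>. Hence the distance is at
  most \<open>sqrt ((1 + \<delta>\<^sup>2)\<^sup>M - 1) \<le> sqrt (2 M \<delta>\<^sup>2)\<close>, which is below \<open>\<alpha>\<close> once
  \<open>\<delta> < \<alpha>\<^sup>2 / (2 sqrt M)\<close>; so \<open>C = 1\<close> works.
\<close>

text \<open>The collision probability \<open>\<Sum>\<^sub>x p(x)\<^sup>2\<close>, written as an expectation so that
  \<open>expectation_prod_Pi_pmf\<close> makes it multiplicative over product measures.\<close>
definition collision_prob :: "'a pmf \<Rightarrow> real" where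
  "collision_prob p = measure_pmf.expectation p (pmf p)"

lemma collision_prob_nonneg: "collision_prob p \<ge> 0"
  unfolding collision_prob_def by (simp add: Bochner_Integration.integral_nonneg)

lemma collision_prob_eq_sum:
  assumes "finite S" "set_pmf p \<subseteq> S"
  shows "collision_prob p = (\<Sum>x\<in>S. (pmf p x)\<^sup>2)"
  unfolding collision_prob_def using assms
  by (subst integral_measure_pmf_real[of S]) (auto simp: power2_eq_square set_pmf_eq)

lemma collision_prob_Pi_pmf:
  assumes "finite A"
  shows "collision_prob (Pi_pmf A d p) = (\<Prod>x\<in>A. collision_prob (p x))"
proof -
  have "collision_prob (Pi_pmf A d p)
      = measure_pmf.expectation (Pi_pmf A d p) (\<lambda>y. \<Prod>x\<in>A. pmf (p x) (y x))"
    unfolding collision_prob_def using assms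
    by (intro Bochner_Integration.integral_cong_AE AE_pmfI)
       (auto simp: set_Pi_pmf PiE_dflt_def pmf_Pi')
  also have "\<dots> = (\<Prod>x\<in>A. collision_prob (p x))"
    unfolding collision_prob_def using assms
    by (intro expectation_prod_Pi_pmf measure_pmf.integrable_const_bound[where B = 1])
       (auto simp: pmf_le_1)
  finally show ?thesis .
qed

lemma tv_dist_pmf_of_set_le:
  assumes fin: "finite S" and ne: "S \<noteq> {}" and q: "set_pmf q \<subseteq> S"
  shows "tv_dist (pmf_of_set S) q \<le> sqrt (real (card S) * collision_prob q - 1)"
proof -
  let ?p = "pmf_of_set S"
  define d where "d x = pmf ?p x - pmf q x" for x
  have prob_eq: "measure_pmf.prob r A = (\<Sum>x\<in>A \<inter> S. pmf r x)" if "set_pmf r \<subseteq> S" for r A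
  proof -
    have "measure_pmf.prob r A = measure_pmf.prob r (A \<inter> S)"
      using that by (intro measure_pmf.finite_measure_eq_AE) (auto simp: AE_measure_pmf_iff)
    then show ?thesis
      using fin by (simp add: measure_measure_pmf_finite)
  qed
  have card_pos: "real (card S) > 0"
    using fin ne by (simp add: card_gt_0_iff)
  have l1_sq: "(\<Sum>x\<in>S. \<bar>d x\<bar>)\<^sup>2 \<le> real (card S) * collision_prob q - 1"
  proof -
    have "(\<Sum>x\<in>S. \<bar>d x\<bar>)\<^sup>2 \<le> real (card S) * (\<Sum>x\<in>S. (d x)\<^sup>2)"
      using Cauchy_Schwarz_ineq_sum[of "\<lambda>_. 1" "\<lambda>x. \<bar>d x\<bar>" S] by simp
    also have "(\<Sum>x\<in>S. (d x)\<^sup>2)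
        = (\<Sum>x\<in>S. (pmf q x)\<^sup>2) - 2 / card S * (\<Sum>x\<in>S. pmf q x) + card S * (1 / card S)\<^sup>2"
      using fin ne
      by (simp add: d_def power2_eq_square algebra_simps sum.distrib sum_subtractf
                    sum_distrib_left sum_divide_distrib)
    also have "\<dots> = collision_prob q - 1 / card S"
      using fin q card_pos
      by (simp add: sum_pmf_eq_1 collision_prob_eq_sum power2_eq_square)
    also have "real (card S) * (collision_prob q - 1 / card S) = real (card S) * collision_prob q - 1"
      using card_pos by (simp add: right_diff_distrib)
    finally show ?thesis .
  qed
  have "\<bar>measure_pmf.prob ?p A - measure_pmf.prob q A\<bar> \<le> sqrt (real (card S) * collision_prob q - 1)" for A
  proof -
    have "\<bar>measure_pmf.prob ?p A - measure_pmf.prob q A\<bar> = \<bar>\<Sum>x\<in>A \<inter> S. d x\<bar>"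
      using fin ne q by (simp add: prob_eq d_def sum_subtractf)
    also have "\<dots> \<le> (\<Sum>x\<in>A \<inter> S. \<bar>d x\<bar>)"
      by (rule sum_abs)
    also have "\<dots> \<le> (\<Sum>x\<in>S. \<bar>d x\<bar>)"
      using fin by (intro sum_mono2) auto
    also have "\<dots> \<le> sqrt (real (card S) * collision_prob q - 1)"
      using l1_sq by (rule real_le_rsqrt)
    finally show ?thesis .
  qed
  then show ?thesis
    unfolding tv_dist_def by (intro cSUP_least) auto
qed

definition mix_pmf :: "real \<Rightarrow> 'a pmf \<Rightarrow> 'a pmf \<Rightarrow> 'a pmf" where
  "mix_pmf \<delta> p q = bernoulli_pmf \<delta> \<bind> (\<lambda>b. if b then q else p)"

lemma pmf_mix_pmf:
  assumes "0 \<le> \<delta>" "\<delta> \<le> 1"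
  shows "pmf (mix_pmf \<delta> p q) x = (1 - \<delta>) * pmf p x + \<delta> * pmf q x"
  using assms by (simp add: mix_pmf_def pmf_bind)

lemma set_pmf_mix_pmf_subset: "set_pmf (mix_pmf \<delta> p q) \<subseteq> set_pmf p \<union> set_pmf q"
  by (auto simp: mix_pmf_def split: if_splits)

lemma mix_pmf_conv_resample:
  fixes p q :: "'a pmf"
  shows "mix_pmf \<delta> p q = p \<bind> (\<lambda>e. bernoulli_pmf \<delta> \<bind> (\<lambda>b. q \<bind> (\<lambda>e'. return_pmf (if b then e' else e))))"
proof -
  have "p \<bind> (\<lambda>e. bernoulli_pmf \<delta> \<bind> (\<lambda>b. q \<bind> (\<lambda>e'. return_pmf (if b then e' else e))))
      = p \<bind> (\<lambda>e. bernoulli_pmf \<delta> \<bind> (\<lambda>b. if b then q else return_pmf e))"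
    by (intro bind_pmf_cong refl) (auto simp: bind_return_pmf')
  also have "\<dots> = bernoulli_pmf \<delta> \<bind> (\<lambda>b. p \<bind> (\<lambda>e. if b then q else return_pmf e))"
    by (rule bind_commute_pmf)
  also have "\<dots> = mix_pmf \<delta> p q"
    unfolding mix_pmf_def by (intro bind_pmf_cong refl) (auto simp: bind_return_pmf')
  finally show ?thesis ..
qed

lemma Pi_pmf_mix_pmf:
  assumes "finite A"
  shows "Pi_pmf A d (\<lambda>i. mix_pmf \<delta> (p i) (q i)) =
           do { E \<leftarrow> Pi_pmf A d p;
                B \<leftarrow> Pi_pmf A False (\<lambda>_. bernoulli_pmf \<delta>);
                E' \<leftarrow> Pi_pmf A d q;
                return_pmf (\<lambda>i. if B i then E' i else E i) }"
proof -
  let ?B = "bernoulli_pmf \<delta>"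
  have "Pi_pmf A d (\<lambda>i. mix_pmf \<delta> (p i) (q i))
      = Pi_pmf A d p \<bind> (\<lambda>E. Pi_pmf A d (\<lambda>i. ?B \<bind>
          (\<lambda>b. q i \<bind> (\<lambda>e'. return_pmf (if b then e' else E i)))))"
    unfolding mix_pmf_conv_resample by (rule Pi_pmf_bind[OF assms])
  also have "\<dots> = Pi_pmf A d p \<bind> (\<lambda>E. Pi_pmf A False (\<lambda>_. ?B) \<bind> (\<lambda>B. Pi_pmf A d (\<lambda>i.
          q i \<bind> (\<lambda>e'. return_pmf (if B i then e' else E i)))))"
    by (intro bind_pmf_cong refl Pi_pmf_bind[OF assms])
  also have "\<dots> = Pi_pmf A d p \<bind> (\<lambda>E. Pi_pmf A False (\<lambda>_. ?B) \<bind> (\<lambda>B. Pi_pmf A d q \<bind>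
          (\<lambda>E'. Pi_pmf A d (\<lambda>i. return_pmf (if B i then E' i else E i)))))"
    by (intro bind_pmf_cong refl Pi_pmf_bind[OF assms])
  also have "\<dots> = do { E \<leftarrow> Pi_pmf A d p;
                        B \<leftarrow> Pi_pmf A False (\<lambda>_. ?B);
                        E' \<leftarrow> Pi_pmf A d q;
                        return_pmf (\<lambda>i. if B i then E' i else E i) }"
  proof (intro bind_pmf_cong refl)
    fix E B E'
    assume E: "E \<in> set_pmf (Pi_pmf A d p)" and B: "B \<in> set_pmf (Pi_pmf A False (\<lambda>_. ?B))"
    have "E i = d" "\<not> B i" if "i \<notin> A" for i
      using set_Pi_pmf_subset[OF assms, of d p] set_Pi_pmf_subset[OF assms, of False "\<lambda>_. ?B"] E B that
      by auto
    then show "Pi_pmf A d (\<lambda>i. return_pmf (if B i then E' i else E i))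
             = return_pmf (\<lambda>i. if B i then E' i else E i)"
      using assms by (auto simp: fun_eq_iff)
  qed
  finally show ?thesis .
qed

lemma collision_prob_mix_pmf_of_set_le:
  assumes fin: "finite S" and W: "W \<subseteq> S" "W \<noteq> {}" and half: "card S \<le> 2 * card W"
    and \<delta>: "0 \<le> \<delta>" "\<delta> \<le> 1"
  shows "real (card S) * collision_prob (mix_pmf \<delta> (pmf_of_set S) (pmf_of_set W)) \<le> 1 + \<delta>\<^sup>2"
proof -
  let ?q = "mix_pmf \<delta> (pmf_of_set S) (pmf_of_set W)"
  define s where "s = real (card S)"
  define w where "w = real (card W)"
  have finW: "finite W" using W(1) fin by (rule finite_subset)
  have w_pos: "w > 0" using finW W(2) by (simp add: w_def card_gt_0_iff)
  have ws: "w \<le> s" using card_mono[OF fin W(1)] by (simp add: w_def s_def)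
  have s_le: "s \<le> 2 * w"
    using half unfolding s_def w_def by (metis of_nat_le_iff of_nat_mult of_nat_numeral)
  have S_ne: "S \<noteq> {}" using W by auto
  have set_q: "set_pmf ?q \<subseteq> S"
    using set_pmf_mix_pmf_subset[of \<delta> "pmf_of_set S" "pmf_of_set W"] fin S_ne finW W by auto
  have pmf_q: "pmf ?q x = (1 - \<delta>) / s + (if x \<in> W then \<delta> / w else 0)" if "x \<in> S" for x
    using that fin S_ne W \<delta> finW by (auto simp: pmf_mix_pmf s_def w_def)
  have "collision_prob ?q = (\<Sum>x\<in>S. (pmf ?q x)\<^sup>2)"
    using fin by (rule collision_prob_eq_sum) (use set_q in simp)
  also have "\<dots> = (\<Sum>x\<in>W. (pmf ?q x)\<^sup>2) + (\<Sum>x\<in>S - W. (pmf ?q x)\<^sup>2)"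
    using fin W(1) by (simp add: sum.subset_diff[of W S] add.commute)
  also have "\<dots> = w * ((1 - \<delta>) / s + \<delta> / w)\<^sup>2 + (s - w) * ((1 - \<delta>) / s)\<^sup>2"
    using W(1) finW fin by (simp add: pmf_q subsetD card_Diff_subset w_def s_def of_nat_diff card_mono)
  finally have "s * collision_prob ?q
      = s * (w * ((1 - \<delta>) / s + \<delta> / w)\<^sup>2 + (s - w) * ((1 - \<delta>) / s)\<^sup>2)"
    by simp
  also have "\<dots> = (1 - \<delta>)\<^sup>2 + 2 * \<delta> * (1 - \<delta>) + \<delta>\<^sup>2 * (s / w)"
    using w_pos ws by (simp add: field_simps power2_eq_square)
  also have "\<dots> \<le> (1 - \<delta>)\<^sup>2 + 2 * \<delta> * (1 - \<delta>) + \<delta>\<^sup>2 * 2"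
    using s_le w_pos by (intro add_left_mono mult_left_mono) (auto simp: divide_le_eq)
  also have "\<dots> = 1 + \<delta>\<^sup>2"
    by (simp add: power2_eq_square algebra_simps)
  finally show ?thesis by (simp add: s_def)
qed

lemma upper_half_atLeastAtMost:
  assumes "n \<ge> 1"
  shows "{nat \<lceil>real n / 2\<rceil>..n} \<subseteq> {1..n}" and "n \<le> 2 * card {nat \<lceil>real n / 2\<rceil>..n}"
proof -
  have "1 \<le> nat \<lceil>real n / 2\<rceil>" "2 * nat \<lceil>real n / 2\<rceil> \<le> n + 1"
    using assms by linarith+
  then show "{nat \<lceil>real n / 2\<rceil>..n} \<subseteq> {1..n}" and "n \<le> 2 * card {nat \<lceil>real n / 2\<rceil>..n}"
    by auto
qed

lemma nu_eq_Pi_pmf: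
  "nu n M \<delta> = Pi_pmf {..<M} 0 (\<lambda>_. mix_pmf \<delta> (pmf_of_set {1..n}) (pmf_of_set {nat \<lceil>real n / 2\<rceil>..n}))"
  unfolding nu_def
  using Pi_pmf_mix_pmf[of "{..<M}" 0 \<delta> "\<lambda>_. pmf_of_set {1..n}" "\<lambda>_. pmf_of_set {nat \<lceil>real n / 2\<rceil>..n}"]
  by simp

lemma tv_dist_mu_nu_le:
  assumes n: "n \<ge> 1" and \<delta>: "0 \<le> \<delta>" "\<delta> \<le> 1"
  shows "tv_dist (mu n M) (nu n M \<delta>) \<le> sqrt ((1 + \<delta>\<^sup>2) ^ M - 1)"
proof -
  define H where "H = {nat \<lceil>real n / 2\<rceil>..n}"
  define q where "q = mix_pmf \<delta> (pmf_of_set {1..n}) (pmf_of_set H)"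
  define S where "S = PiE_dflt {..<M} 0 (\<lambda>_. {1..n})"
  have H: "H \<subseteq> {1..n}" "H \<noteq> {}" "n \<le> 2 * card H"
    using upper_half_atLeastAtMost[OF n] n by (auto simp: H_def)
  have mu: "mu n M = pmf_of_set S"
    unfolding mu_def S_def using n by (intro Pi_pmf_of_set) auto
  have nu: "nu n M \<delta> = Pi_pmf {..<M} 0 (\<lambda>_. q)"
    unfolding nu_eq_Pi_pmf q_def H_def ..
  have "set_pmf q \<subseteq> {1..n}"
    using set_pmf_mix_pmf_subset[of \<delta> "pmf_of_set {1..n}" "pmf_of_set H"] H n
    by (auto simp: q_def finite_subset)
  then have supp: "set_pmf (nu n M \<delta>) \<subseteq> S"
    using set_Pi_pmf_subset'[of "{..<M}" 0 "\<lambda>_. q"] unfolding nu S_def PiE_dflt_def by force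
  have "real (card S) * collision_prob (nu n M \<delta>) = (real n * collision_prob q) ^ M"
    by (simp add: S_def nu card_PiE_dflt collision_prob_Pi_pmf power_mult_distrib)
  also have "\<dots> \<le> (1 + \<delta>\<^sup>2) ^ M"
    using collision_prob_mix_pmf_of_set_le[of "{1..n}" H \<delta>] H \<delta>
    by (intro power_mono) (auto simp: q_def collision_prob_nonneg)
  finally have collision: "real (card S) * collision_prob (nu n M \<delta>) \<le> (1 + \<delta>\<^sup>2) ^ M" .
  have "finite S" "S \<noteq> {}"
    using n by (auto simp: S_def)
  then have "tv_dist (mu n M) (nu n M \<delta>) \<le> sqrt (real (card S) * collision_prob (nu n M \<delta>) - 1)"
    unfolding mu using supp by (rule tv_dist_pmf_of_set_le)
  also have "\<dots> \<le> sqrt ((1 + \<delta>\<^sup>2) ^ M - 1)"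
    using collision by simp
  finally show ?thesis .
qed

lemma one_plus_power_le:
  fixes x :: real
  assumes "0 \<le> x" "real n * x \<le> 1/2"
  shows "(1 + x) ^ n \<le> 1 + 2 * (real n * x)"
proof -
  have "(1 + x) ^ n \<le> exp x ^ n"
    using assms(1) by (intro power_mono) auto
  also have "\<dots> = exp (real n * x)"
    by (simp add: exp_of_nat_mult)
  also have "\<dots> \<le> 1 + 2 * (real n * x)"
    using assms by (intro real_exp_bound_lemma) auto
  finally show ?thesis .
qed

lemma power_one_plus_sq_sub_one_le:
  fixes \<alpha> \<delta> :: real
  assumes M: "M \<ge> 1" and \<alpha>: "0 < \<alpha>" "\<alpha> < 1/2"
    and \<delta>: "0 \<le> \<delta>" "\<delta> < \<alpha>\<^sup>2 / (2 * sqrt (real M))"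
  shows "(1 + \<delta>\<^sup>2) ^ M - 1 \<le> \<alpha>\<^sup>2"
proof -
  have "\<delta> * (2 * sqrt (real M)) < \<alpha>\<^sup>2"
    using \<delta>(2) M by (simp add: field_simps)
  then have "(\<delta> * (2 * sqrt (real M)))\<^sup>2 \<le> (\<alpha>\<^sup>2)\<^sup>2"
    using \<delta>(1) by (intro power_mono) auto
  then have M\<delta>: "real M * \<delta>\<^sup>2 \<le> \<alpha>\<^sup>2 * \<alpha>\<^sup>2 / 4"
    by (simp add: power_mult_distrib power2_eq_square[of "\<alpha>\<^sup>2"] mult_ac)
  have "\<alpha>\<^sup>2 < (1/2)\<^sup>2"
    using \<alpha> by (intro power_strict_mono) auto
  then have "\<alpha>\<^sup>2 \<le> 1/4"
    by (simp add: power_divide)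
  then have "\<alpha>\<^sup>2 * \<alpha>\<^sup>2 \<le> \<alpha>\<^sup>2 * (1/4)"
    by (intro mult_left_mono) auto
  then have small: "real M * \<delta>\<^sup>2 \<le> \<alpha>\<^sup>2 / 16"
    using M\<delta> by linarith
  then have "(1 + \<delta>\<^sup>2) ^ M \<le> 1 + 2 * (real M * \<delta>\<^sup>2)"
    using \<open>\<alpha>\<^sup>2 \<le> 1/4\<close> by (intro one_plus_power_le) auto
  then show ?thesis
    using small zero_le_power2[of \<alpha>] by linarith
qed

theorem lemma2:
  shows "\<exists>C::real. C > 0 \<and>
    (\<forall>(n::nat) (M::nat) (\<alpha>::real) (\<delta>::real).
       n \<ge> 1 \<longrightarrow> M \<ge> 1 \<longrightarrow> 0 < \<alpha> \<longrightarrow> \<alpha> < 1/2 \<longrightarrow>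
       0 < \<delta> \<longrightarrow> \<delta> < (1/2) * min 1 (C * \<alpha>\<^sup>2 / sqrt (real M)) \<longrightarrow>
       tv_dist (mu n M) (nu n M \<delta>) \<le> \<alpha>)"
proof (intro exI[of _ 1] conjI allI impI)
  fix n M :: nat and \<alpha> \<delta> :: real
  assume n: "n \<ge> 1" and M: "M \<ge> 1" and \<alpha>: "0 < \<alpha>" "\<alpha> < 1/2" and \<delta>: "0 < \<delta>"
    and \<delta>_small: "\<delta> < (1/2) * min 1 (1 * \<alpha>\<^sup>2 / sqrt (real M))"
  have "\<delta> \<le> 1" "\<delta> < \<alpha>\<^sup>2 / (2 * sqrt (real M))"
    using \<delta>_small by (auto simp: min_def split: if_splits)
  then have "(1 + \<delta>\<^sup>2) ^ M - 1 \<le> \<alpha>\<^sup>2"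
    using power_one_plus_sq_sub_one_le[OF M \<alpha>] \<delta> by simp
  then have "sqrt ((1 + \<delta>\<^sup>2) ^ M - 1) \<le> \<alpha>"
    using \<alpha> by (intro real_le_lsqrt) auto
  then show "tv_dist (mu n M) (nu n M \<delta>) \<le> \<alpha>"
    using tv_dist_mu_nu_le[OF n, of \<delta> M] \<delta> \<open>\<delta> \<le> 1\<close> by linarith
qed simp

end
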